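(* Fix $\lambda>0$ and a positive integer $d$, let $\tilde x_\lambda(d)$ be the unique positive solution of $d\,x=1+\lambda/(1+x)^d$, and let $\nu_\lambda(d)=\xi(d)=\sup_{x\ge0}\Xi(d,x)$ where $\Xi(d,x)=\frac{dx}{1+x}\cdot\frac{f_{d,\lambda}(x)}{1+f_{d,\lambda}(x)}$ and $f_{d,\lambda}(x)=\lambda/(1+x)^d$. Then: (1) $\nu_\lambda(d)=\frac{d\tilde x_\lambda(d)-1}{1+\tilde x_\lambda(d)}$, and $\nu_\lambda(d)=\frac1d$ when $\lambda=\lambda_c(d)=\frac{d^d}{(d-1)^{d+1}}$ (for $d\ge2$). (2) $\nu_\lambda(d)$ is increasing in $d$ for fixed $\lambda>0$. (3) $\nu_\lambda(d)$ is increasing in $\lambda$ for fixed $d>0$.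
   Context: Here $\Xi(d,x)$ is the function $d\big(\Phi(f_{d,\lambda}(x))f_{d,\lambda}(x)/((1+x)\Phi(x))\big)^2$ for $\Phi(x)=\frac{1}{2\sqrt{x(1+x)}}$ (the derivative of $\sinh^{-1}\sqrt x$), which simplifies to the stated form. In items (2)–(3), $d$ is treated as a real parameter with the same formulas. *)

theory Defs
  imports "HOL-Analysis.Analysis"
begin

definition fdl :: "real \<Rightarrow> real \<Rightarrow> real \<Rightarrow> real" where
  "fdl d lam x = lam / (1 + x) powr d"

definition Xi :: "real \<Rightarrow> real \<Rightarrow> real \<Rightarrow> real" where
  "Xi lam d x = (d * x / (1 + x)) * (fdl d lam x / (1 + fdl d lam x))"

definition nu :: "real \<Rightarrow> real \<Rightarrow> real" where
  "nu lam d = (SUP x\<in>{0..}. Xi lam d x)"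

definition xtilde :: "real \<Rightarrow> real \<Rightarrow> real" where
  "xtilde lam d = (THE x. x > 0 \<and> d * x = 1 + lam / (1 + x) powr d)"

definition lambda_c :: "real \<Rightarrow> real" where
  "lambda_c d = d powr d / (d - 1) powr (d + 1)"

end

theory Submission
  imports Defs
begin

text \<open>
  The equation for \<open>x\<close> says that \<open>g(x) = d x - 1 - f(x)\<close> vanishes; \<open>g\<close> is strictly increasing,
  negative at \<open>0\<close> and eventually positive, so the root is unique. The logarithmic derivative
  of \<open>\<Xi>(x)\<close> is \<open>-g(x) / (x (1 + x) (1 + f(x)))\<close>, so the supremum is a maximum attained at the root,
  and substituting the equation gives the closed form. Monotonicity in \<open>\<lambda>\<close> is immediate since
  \<open>f\<close> grows with \<open>\<lambda>\<close>. For \<open>d\<^sub>1 < d\<^sub>2\<close>, the point \<open>y\<close> with \<open>(1+y)^d\<^sub>2 = (1+x)^d\<^sub>1\<close> has the same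
  value of \<open>f\<close>, and the remaining factor increases by the strict Bernoulli inequality
  \<open>v^a < 1 - a + a v\<close> for \<open>0 < v, a < 1\<close>.
\<close>

definition fixed_point_gap :: "real \<Rightarrow> real \<Rightarrow> real \<Rightarrow> real" where
  "fixed_point_gap lam d x = d * x - 1 - fdl d lam x"

lemma fdl_pos: "lam > 0 \<Longrightarrow> x > -1 \<Longrightarrow> fdl d lam x > 0"
  by (simp add: fdl_def)

lemma fixed_point_gap_strict_mono:
  assumes "d > 0" "lam > 0"
  shows "strict_mono_on {0..} (fixed_point_gap lam d)"
proof (rule strict_mono_onI)
  fix x y :: real
  assume "x \<in> {0..}" "y \<in> {0..}" "x < y"
  then have "(1 + x) powr d < (1 + y) powr d"
    using assms by (intro powr_less_mono2) auto
  then have "fdl d lam y < fdl d lam x"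
    using assms \<open>x \<in> {0..}\<close> \<open>x < y\<close>
    by (auto simp: fdl_def intro!: divide_strict_left_mono mult_pos_pos)
  moreover have "d * x < d * y"
    using assms \<open>x < y\<close> by simp
  ultimately show "fixed_point_gap lam d x < fixed_point_gap lam d y"
    by (simp add: fixed_point_gap_def)
qed

lemma fixed_point_gap_root_exists:
  assumes "d > 0" "lam > 0"
  shows "\<exists>x>0. fixed_point_gap lam d x = 0"
proof -
  define b where "b = (1 + lam) / d"
  have "b \<ge> 0"
    using assms by (simp add: b_def)
  then have "fdl d lam b \<le> lam"
    using assms by (simp add: fdl_def divide_le_eq ge_one_powr_ge_zero)
  then have "0 \<le> fixed_point_gap lam d b"
    using assms by (simp add: fixed_point_gap_def b_def)
  moreover have neg: "fixed_point_gap lam d 0 < 0"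
    using assms by (simp add: fixed_point_gap_def fdl_def)
  moreover have "continuous_on {0..b} (fixed_point_gap lam d)"
    unfolding fixed_point_gap_def fdl_def by (intro continuous_intros) auto
  ultimately obtain x where "0 \<le> x" "fixed_point_gap lam d x = 0"
    using IVT'[of "fixed_point_gap lam d" 0 0 b] \<open>b \<ge> 0\<close> by auto
  with neg show ?thesis
    by (metis order_le_less)
qed

lemma xtilde_equation_iff_fixed_point_gap:
  "d * x = 1 + lam / (1 + x) powr d \<longleftrightarrow> fixed_point_gap lam d x = 0"
  by (auto simp: fixed_point_gap_def fdl_def)

lemma fixed_point_gap_root_unique:
  assumes "d > 0" "lam > 0"
  shows "\<exists>!x. x > 0 \<and> fixed_point_gap lam d x = 0"
  using fixed_point_gap_root_exists[OF assms]
    strict_mono_on_eqD[OF fixed_point_gap_strict_mono[OF assms]]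
  by fastforce

lemma xtilde_root:
  assumes "d > 0" "lam > 0"
  shows "xtilde lam d > 0" "fixed_point_gap lam d (xtilde lam d) = 0"
  using theI'[OF fixed_point_gap_root_unique[OF assms]]
  unfolding xtilde_def xtilde_equation_iff_fixed_point_gap by auto

lemma xtilde_unique:
  assumes "d > 0" "lam > 0" "x > 0" "fixed_point_gap lam d x = 0"
  shows "xtilde lam d = x"
  using fixed_point_gap_root_unique[OF assms(1,2)] xtilde_root[OF assms(1,2)] assms(3,4)
  by blast

lemma max_at_derivative_sign_change:
  fixes g g' :: "real \<Rightarrow> real"
  assumes deriv: "\<And>y. a < y \<Longrightarrow> (g has_real_derivative g' y) (at y)"
    and up: "\<And>y. a < y \<Longrightarrow> y < t \<Longrightarrow> g' y \<ge> 0"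
    and down: "\<And>y. t < y \<Longrightarrow> g' y \<le> 0"
    and "a < t" "a < x"
  shows "g x \<le> g t"
proof -
  have cont: "continuous_on {u..v} g" if "a < u" for u v
  proof (intro continuous_at_imp_continuous_on ballI)
    fix y assume "y \<in> {u..v}"
    then show "isCont g y"
      using that by (intro DERIV_isCont[OF deriv]) auto
  qed
  show ?thesis
  proof (cases "x \<le> t")
    case True
    show ?thesis
    proof (rule DERIV_nonneg_imp_increasing_open[OF True _ cont[OF \<open>a < x\<close>]])
      fix y assume "x < y" "y < t"
      then show "\<exists>D. (g has_real_derivative D) (at y) \<and> D \<ge> 0"
        using deriv[of y] up[of y] \<open>a < x\<close> by (intro exI[of _ "g' y"]) auto
    qed
  next
    case False
    show ?thesis
    proof (rule DERIV_nonpos_imp_decreasing_open[OF _ _ cont[OF \<open>a < t\<close>]])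
      show "t \<le> x" using False by simp
      fix y assume "t < y" "y < x"
      then show "\<exists>D. (g has_real_derivative D) (at y) \<and> D \<le> 0"
        using deriv[of y] down[of y] \<open>a < t\<close> by (intro exI[of _ "g' y"]) auto
    qed
  qed
qed

definition Xi_log :: "real \<Rightarrow> real \<Rightarrow> real \<Rightarrow> real" where
  "Xi_log lam d x = ln x - (1 + d) * ln (1 + x) - ln (1 + fdl d lam x)"

lemma Xi_eq_exp_Xi_log:
  assumes "lam > 0" "x > 0"
  shows "Xi lam d x = d * lam * exp (Xi_log lam d x)"
proof -
  have "exp (Xi_log lam d x) = x / ((1 + x) * (1 + x) powr d * (1 + fdl d lam x))"
    using assms fdl_pos[of lam x d]
    by (simp add: Xi_log_def exp_diff powr_def exp_add algebra_simps)
  then show ?thesis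
    by (simp add: Xi_def fdl_def ac_simps)
qed

lemma Xi_log_has_derivative:
  assumes "lam > 0" "x > 0"
  shows "(Xi_log lam d has_real_derivative
      - fixed_point_gap lam d x / (x * (1 + x) * (1 + fdl d lam x))) (at x)"
proof -
  define P where "P = (1 + x) powr d"
  have "P > 0" "1 + lam / P = (P + lam) / P"
    using assms by (simp_all add: P_def field_simps)
  then have derivative_eq: "1 / x - (1 + d) / (1 + x) + lam * (d * (P / (1 + x))) / (P * P * (1 + lam / P))
      = - (d * x - 1 - lam / P) / (x * (1 + x) * (1 + lam / P))"
    using assms by (simp add: divide_simps) (simp add: algebra_simps)
  have "(1 + x) powr (d - 1) = P / (1 + x)"
    using assms by (simp add: P_def powr_diff)
  then show ?thesis
    unfolding Xi_log_def fixed_point_gap_def fdl_def P_def[symmetric]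
    by (intro DERIV_cong[OF _ derivative_eq] derivative_eq_intros)
      (use assms \<open>P > 0\<close> in \<open>auto simp: P_def[symmetric] add_pos_pos\<close>)
qed

lemma Xi_le_Xi_xtilde:
  assumes "d > 0" "lam > 0" "x \<ge> 0"
  shows "Xi lam d x \<le> Xi lam d (xtilde lam d)"
proof (cases "x = 0")
  case True
  have "xtilde lam d > 0" "fdl d lam (xtilde lam d) > 0"
    using xtilde_root[OF assms(1,2)] fdl_pos[OF assms(2)] by auto
  then show ?thesis
    using True assms by (simp add: Xi_def)
next
  case False
  let ?t = "xtilde lam d"
  note gap_mono = strict_mono_onD[OF fixed_point_gap_strict_mono[OF assms(1,2)]]
  have gap_neg: "fixed_point_gap lam d y < 0" if "0 \<le> y" "y < ?t" for y
    using gap_mono[of y ?t] that xtilde_root[OF assms(1,2)] by simp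
  have gap_pos: "fixed_point_gap lam d y > 0" if "?t < y" for y
    using gap_mono[of ?t y] that xtilde_root[OF assms(1,2)] by simp
  have "Xi_log lam d x \<le> Xi_log lam d ?t"
  proof (rule max_at_derivative_sign_change[OF Xi_log_has_derivative[OF assms(2)]])
    fix y assume "0 < y" "y < ?t"
    then show "- fixed_point_gap lam d y / (y * (1 + y) * (1 + fdl d lam y)) \<ge> 0"
      using gap_neg[of y] fdl_pos[OF assms(2), of y d]
      by (simp add: divide_nonpos_pos add_pos_pos)
  next
    fix y assume "?t < y"
    moreover have "0 < y"
      using \<open>?t < y\<close> xtilde_root[OF assms(1,2)] by linarith
    ultimately show "- fixed_point_gap lam d y / (y * (1 + y) * (1 + fdl d lam y)) \<le> 0"
      using gap_pos[of y] fdl_pos[OF assms(2), of y d]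
      by (simp add: divide_nonneg_pos add_pos_pos)
  qed (use False assms xtilde_root[OF assms(1,2)] in auto)
  then show ?thesis
    using False assms xtilde_root[OF assms(1,2)] by (simp add: Xi_eq_exp_Xi_log)
qed

lemma nu_eq_Xi_xtilde:
  assumes "d > 0" "lam > 0"
  shows "nu lam d = Xi lam d (xtilde lam d)"
  unfolding nu_def
  using xtilde_root[OF assms] Xi_le_Xi_xtilde[OF assms] by (intro cSup_eq_maximum) auto

lemma nu_eq_xtilde_formula:
  assumes "d > 0" "lam > 0"
  shows "nu lam d = (d * xtilde lam d - 1) / (1 + xtilde lam d)"
proof -
  define t where "t = xtilde lam d"
  have "t > 0" "fdl d lam t = d * t - 1"
    using xtilde_root[OF assms] by (simp_all add: t_def fixed_point_gap_def)
  then have "Xi lam d t = (d * t / (1 + t)) * ((d * t - 1) / (d * t))"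
    by (simp add: Xi_def)
  also have "\<dots> = (d * t - 1) / (1 + t)"
    using \<open>t > 0\<close> assms by (simp add: divide_simps)
  finally show ?thesis
    using nu_eq_Xi_xtilde[OF assms] by (simp add: t_def)
qed

lemma xtilde_lambda_c:
  assumes "d > 1"
  shows "xtilde (lambda_c d) d = 1 / (d - 1)"
proof (rule xtilde_unique)
  have one_plus: "1 + 1 / (d - 1) = d / (d - 1)"
    using assms by (simp add: field_simps)
  have "lambda_c d = (d / (d - 1)) powr d / (d - 1)"
    using assms by (simp add: lambda_c_def powr_add powr_divide)
  then show "fixed_point_gap (lambda_c d) d (1 / (d - 1)) = 0"
    using assms by (simp add: fixed_point_gap_def fdl_def one_plus field_simps)
  show "lambda_c d > 0"
    using assms by (simp add: lambda_c_def)
qed (use assms in auto)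

lemma nu_lambda_c:
  assumes "d > 1"
  shows "nu (lambda_c d) d = 1 / d"
proof -
  have "lambda_c d > 0"
    using assms by (simp add: lambda_c_def)
  then show ?thesis
    using assms by (simp add: nu_eq_xtilde_formula xtilde_lambda_c field_simps)
qed

lemma powr_less_Bernoulli:
  fixes v a :: real
  assumes "0 < v" "v < 1" "0 < a" "a < 1"
  shows "v powr a < 1 - a + a * v"
proof -
  have "v powr a - a * v < 1 powr a - a * 1"
  proof (rule DERIV_pos_imp_increasing_open[OF \<open>v < 1\<close>])
    fix w :: real assume "v < w" "w < 1"
    then have "1 < w powr (a - 1)"
      using assms powr_less_mono2_neg[of "a - 1" w 1] by simp
    then have "0 < a * w powr (a - 1) - a * 1"
      using assms by (simp only: diff_gt_0_iff_gt mult_less_cancel_left_pos)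
    moreover have "((\<lambda>w. w powr a - a * w) has_real_derivative a * w powr (a - 1) - a * 1) (at w)"
      using \<open>v < w\<close> assms by (auto intro!: derivative_eq_intros)
    ultimately show "\<exists>D. ((\<lambda>w. w powr a - a * w) has_real_derivative D) (at w) \<and> 0 < D"
      by blast
  qed (use assms in \<open>intro continuous_intros; auto\<close>)
  then show ?thesis
    by simp
qed

lemma nu_strict_mono_lambda:
  assumes "d > 0"
  shows "strict_mono_on {0<..} (\<lambda>lam. nu lam d)"
proof (rule strict_mono_onI)
  fix l1 l2 :: real
  assume "l1 \<in> {0<..}" "l2 \<in> {0<..}" "l1 < l2"
  then have l: "0 < l1" "0 < l2" by auto
  define x where "x = xtilde l1 d"
  have "x > 0"
    using xtilde_root[OF assms l(1)] by (simp add: x_def)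
  have f: "0 < fdl d l1 x" "fdl d l1 x < fdl d l2 x"
    using l \<open>l1 < l2\<close> \<open>x > 0\<close> by (auto simp: fdl_def divide_strict_right_mono)
  have "fdl d l1 x / (1 + fdl d l1 x) < fdl d l2 x / (1 + fdl d l2 x)"
    using f by (simp add: field_simps)
  then have "Xi l1 d x < Xi l2 d x"
    unfolding Xi_def by (rule mult_strict_left_mono) (use assms \<open>x > 0\<close> in simp)
  also have "\<dots> \<le> Xi l2 d (xtilde l2 d)"
    using Xi_le_Xi_xtilde[OF assms l(2)] \<open>x > 0\<close> by simp
  finally show "nu l1 d < nu l2 d"
    using nu_eq_Xi_xtilde assms l by (simp add: x_def)
qed

lemma nu_strict_mono_degree:
  assumes "lam > 0"
  shows "strict_mono_on {0<..} (\<lambda>d. nu lam d)"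
proof (rule strict_mono_onI)
  fix d1 d2 :: real
  assume "d1 \<in> {0<..}" "d2 \<in> {0<..}" "d1 < d2"
  then have d: "0 < d1" "0 < d2" by auto
  define x where "x = xtilde lam d1"
  define a where "a = d1 / d2"
  define v where "v = 1 / (1 + x)"
  define y where "y = (1 + x) powr a - 1"
  have "x > 0"
    using xtilde_root[OF d(1) assms] by (simp add: x_def)
  have a: "0 < a" "a < 1" and v: "0 < v" "v < 1"
    using d \<open>d1 < d2\<close> \<open>x > 0\<close> by (simp_all add: a_def v_def)
  have "y > 0"
    using \<open>x > 0\<close> a by (simp add: y_def gr_one_powr)
  have same_f: "fdl d2 lam y = fdl d1 lam x"
    using d \<open>x > 0\<close> by (simp add: fdl_def y_def a_def powr_powr)
  have "1 - v = x / (1 + x)"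
    using \<open>x > 0\<close> by (simp add: v_def field_simps)
  then have "d1 * x / (1 + x) = d2 * (a * (1 - v))"
    using d by (simp add: a_def)
  also have "\<dots> < d2 * (1 - v powr a)"
    using powr_less_Bernoulli[OF v a] d by (intro mult_strict_left_mono) (auto simp: algebra_simps)
  also have "\<dots> = d2 * y / (1 + y)"
    using \<open>x > 0\<close> by (simp add: v_def y_def powr_divide field_simps)
  finally have "Xi lam d1 x < Xi lam d2 y"
    unfolding Xi_def same_f
    by (rule mult_strict_right_mono) (use fdl_pos[OF assms, of x d1] \<open>x > 0\<close> in simp)
  also have "\<dots> \<le> Xi lam d2 (xtilde lam d2)"
    using Xi_le_Xi_xtilde[OF d(2) assms] \<open>y > 0\<close> by simp
  finally show "nu lam d1 < nu lam d2"
    using nu_eq_Xi_xtilde assms d by (simp add: x_def)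
qed

theorem lemma4p3:
  shows "(\<forall>lam>0. \<forall>n::nat. n \<ge> 1 \<longrightarrow>
            nu lam (real n) = (real n * xtilde lam (real n) - 1) / (1 + xtilde lam (real n)))
       \<and> (\<forall>n::nat. n \<ge> 2 \<longrightarrow> nu (lambda_c (real n)) (real n) = 1 / real n)
       \<and> (\<forall>lam>0. strict_mono_on {0<..} (\<lambda>d. nu lam d))
       \<and> (\<forall>d>0. strict_mono_on {0<..} (\<lambda>lam. nu lam d))"
  using nu_eq_xtilde_formula nu_lambda_c nu_strict_mono_degree nu_strict_mono_lambda by auto

end
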